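(* Let $U_1,U_2,V_1,V_2$ be independent real random variables. Assume there exist $0\le c_0\le1$ and $x_0>0$ such that for all $0\le x\le x_0$, $$\mathbb P(|U_1|\ge x)=\mathbb P(|V_1|\ge x)(1+\theta_{1,x}),\qquad\mathbb P(|U_2|\ge x)=\mathbb P(|V_2|\ge x)(1+\theta_{2,x}),$$ with $|\theta_{1,x}|\le c_0$ and $|\theta_{2,x}|\le c_0$. Then for all $0\le x\le x_0$, $$\mathbb P(U_1^2+U_2^2\ge x^2)=\mathbb P(V_1^2+V_2^2\ge x^2)(1+\theta_x)$$ for some $\theta_x$ with $|\theta_x|\le3c_0$. *)

theory Defs
  imports "HOL-Probability.Probability"
begin

end

theory Submission imports Defs begin

text \<open>
  Conditioning on the second coordinate writes a tail of \<open>X\<^sup>2 + Y\<^sup>2\<close> as an integral over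
  the law of \<open>Y\<close> of tails of \<open>\<bar>X\<bar>\<close> at levels in \<open>[0, x]\<close>; so a two-sided relative
  bound \<open>1 \<plusminus> c\<close> on the tails of \<open>\<bar>X\<bar>\<close> transfers to \<open>X\<^sup>2 + Y\<^sup>2\<close>. Replacing \<open>U\<^sub>1\<close> by
  \<open>V\<^sub>1\<close> and then \<open>U\<^sub>2\<close> by \<open>V\<^sub>2\<close> costs a factor \<open>(1 \<plusminus> c)\<^sup>2\<close>, which lies within \<open>1 \<plusminus> 3c\<close>
  for \<open>c \<le> 1\<close>.
\<close>

definition tail_abs :: "'a measure \<Rightarrow> ('a \<Rightarrow> real) \<Rightarrow> real \<Rightarrow> real" where
  "tail_abs M X t = measure M {\<omega> \<in> space M. t \<le> \<bar>X \<omega>\<bar>}"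

definition tail_sum_squares :: "'a measure \<Rightarrow> ('a \<Rightarrow> real) \<Rightarrow> ('a \<Rightarrow> real) \<Rightarrow> real \<Rightarrow> real" where
  "tail_sum_squares M X Y x = measure M {\<omega> \<in> space M. x\<^sup>2 \<le> (X \<omega>)\<^sup>2 + (Y \<omega>)\<^sup>2}"

lemma tail_sum_squares_commute: "tail_sum_squares M X Y x = tail_sum_squares M Y X x"
  by (simp add: tail_sum_squares_def add.commute)

lemma rel_error_iff_bounds:
  fixes a b c :: real
  assumes "0 \<le> b" "0 \<le> c"
  shows "(\<exists>\<theta>. \<bar>\<theta>\<bar> \<le> c \<and> a = b * (1 + \<theta>)) \<longleftrightarrow> (1 - c) * b \<le> a \<and> a \<le> (1 + c) * b"
proof
  assume "\<exists>\<theta>. \<bar>\<theta>\<bar> \<le> c \<and> a = b * (1 + \<theta>)"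
  then obtain \<theta> where "\<bar>\<theta>\<bar> \<le> c" "a = b * (1 + \<theta>)" by blast
  then show "(1 - c) * b \<le> a \<and> a \<le> (1 + c) * b"
    using assms mult_left_mono[of \<theta> c b] mult_left_mono[of "-\<theta>" c b]
    by (auto simp: abs_le_iff algebra_simps)
next
  assume bounds: "(1 - c) * b \<le> a \<and> a \<le> (1 + c) * b"
  show "\<exists>\<theta>. \<bar>\<theta>\<bar> \<le> c \<and> a = b * (1 + \<theta>)"
  proof (cases "b = 0")
    case True
    then show ?thesis using bounds assms by (intro exI[of _ 0]) auto
  next
    case False
    with assms have "0 < b" by simp
    then show ?thesis using bounds
      by (intro exI[of _ "(a - b) / b"])
         (auto simp: abs_le_iff pos_divide_le_eq pos_le_divide_eq field_simps)
  qed
qed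

lemma rel_bounds_trans:
  fixes a b d c :: real
  assumes "(1 - c) * b \<le> a" "a \<le> (1 + c) * b" "(1 - c) * d \<le> b" "b \<le> (1 + c) * d"
    and "0 \<le> c" "c \<le> 1" "0 \<le> d"
  shows "(1 - 3 * c) * d \<le> a" "a \<le> (1 + 3 * c) * d"
proof -
  have "(1 - c) * ((1 - c) * d) \<le> a" "a \<le> (1 + c) * ((1 + c) * d)"
    using assms by (meson order_trans mult_left_mono diff_ge_0_iff_ge add_nonneg_nonneg zero_le_one)+
  moreover have "c * c * d \<le> c * d"
    using assms by (intro mult_right_mono) (simp_all add: mult_left_le)
  moreover have "0 \<le> c * c * d" using assms by simp
  ultimately show "(1 - 3 * c) * d \<le> a" "a \<le> (1 + 3 * c) * d"
    by (simp_all add: algebra_simps)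
qed

lemma (in prob_space) indep_vars_imp_indep_var:
  assumes "indep_vars M' X I" "i \<in> I" "j \<in> I" "i \<noteq> j"
  shows "indep_var (M' i) (X i) (M' j) (X j)"
proof -
  have "indep_var (M' i) ((\<lambda>f. f i) \<circ> (\<lambda>\<omega>. restrict (\<lambda>i. X i \<omega>) {i}))
                  (M' j) ((\<lambda>f. f j) \<circ> (\<lambda>\<omega>. restrict (\<lambda>i. X i \<omega>) {j}))"
  proof (rule indep_var_compose)
    show "indep_var (PiM {i} M') (\<lambda>\<omega>. restrict (\<lambda>i. X i \<omega>) {i})
                    (PiM {j} M') (\<lambda>\<omega>. restrict (\<lambda>i. X i \<omega>) {j})"
      using assms by (intro indep_var_restrict) auto
  qed measurable
  then show ?thesis by (simp add: comp_def)
qed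

lemma (in prob_space) borel_measurable_tail_abs:
  assumes [measurable]: "X \<in> borel_measurable M"
  shows "tail_abs M X \<in> borel_measurable borel"
proof -
  have "mono (\<lambda>t. - tail_abs M X t)"
    unfolding tail_abs_def by (intro monoI le_imp_neg_le finite_measure_mono) auto
  then have "(\<lambda>t. - (- tail_abs M X t)) \<in> borel_measurable borel"
    by (intro borel_measurable_uminus borel_measurable_mono)
  then show ?thesis by simp
qed

lemma sum_squares_ge_iff:
  fixes a x y :: real
  shows "x\<^sup>2 \<le> a\<^sup>2 + y\<^sup>2 \<longleftrightarrow> sqrt (max 0 (x\<^sup>2 - y\<^sup>2)) \<le> \<bar>a\<bar>"
proof -
  have "sqrt (max 0 (x\<^sup>2 - y\<^sup>2)) \<le> \<bar>a\<bar> \<longleftrightarrow> sqrt (max 0 (x\<^sup>2 - y\<^sup>2)) \<le> sqrt (a\<^sup>2)" by simp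
  also have "\<dots> \<longleftrightarrow> max 0 (x\<^sup>2 - y\<^sup>2) \<le> a\<^sup>2" by (rule real_sqrt_le_iff)
  finally show ?thesis by auto
qed

lemma (in prob_space) tail_sum_squares_eq_nn_integral:
  assumes "indep_var borel X borel Y"
  shows "ennreal (tail_sum_squares M X Y x)
    = (\<integral>\<^sup>+ y. ennreal (tail_abs M X (sqrt (max 0 (x\<^sup>2 - y\<^sup>2)))) \<partial>distr M borel Y)"
proof -
  have [measurable]: "X \<in> borel_measurable M" "Y \<in> borel_measurable M"
    and law: "distr M borel X \<Otimes>\<^sub>M distr M borel Y = distr M (borel \<Otimes>\<^sub>M borel) (\<lambda>\<omega>. (X \<omega>, Y \<omega>))"
    using assms unfolding indep_var_distribution_eq by auto
  interpret PX: prob_space "distr M borel X" by (rule prob_space_distr) simp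
  interpret PY: prob_space "distr M borel Y" by (rule prob_space_distr) simp
  interpret pair_sigma_finite "distr M borel X" "distr M borel Y" ..
  define S where "S = {p \<in> space (borel \<Otimes>\<^sub>M borel). x\<^sup>2 \<le> (fst p)\<^sup>2 + (snd p)\<^sup>2}"
  have S_sets [measurable]: "S \<in> sets (borel \<Otimes>\<^sub>M borel)" unfolding S_def by measurable
  have "ennreal (tail_sum_squares M X Y x) = emeasure (distr M (borel \<Otimes>\<^sub>M borel) (\<lambda>\<omega>. (X \<omega>, Y \<omega>))) S"
    unfolding tail_sum_squares_def emeasure_eq_measure[symmetric] using S_sets
    by (subst emeasure_distr) (auto simp: S_def space_pair_measure intro!: arg_cong2[where f=emeasure])
  also have "\<dots> = emeasure (distr M borel X \<Otimes>\<^sub>M distr M borel Y) S" by (simp add: law)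
  also have "\<dots> = (\<integral>\<^sup>+ y. emeasure (distr M borel X) ((\<lambda>a. (a, y)) -` S) \<partial>distr M borel Y)"
    by (rule emeasure_pair_measure_alt2) simp
  also have "\<dots> = (\<integral>\<^sup>+ y. ennreal (tail_abs M X (sqrt (max 0 (x\<^sup>2 - y\<^sup>2)))) \<partial>distr M borel Y)"
  proof (rule nn_integral_cong)
    fix y :: real
    have "(\<lambda>a. (a, y)) -` S = {a. x\<^sup>2 \<le> a\<^sup>2 + y\<^sup>2}" by (simp add: S_def space_pair_measure)
    moreover have "{a::real. x\<^sup>2 \<le> a\<^sup>2 + y\<^sup>2} \<in> sets borel" by measurable
    ultimately show "emeasure (distr M borel X) ((\<lambda>a. (a, y)) -` S)
        = ennreal (tail_abs M X (sqrt (max 0 (x\<^sup>2 - y\<^sup>2))))"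
      by (simp add: emeasure_distr tail_abs_def emeasure_eq_measure sum_squares_ge_iff
          vimage_def Int_def conj_commute)
  qed
  finally show ?thesis .
qed

lemma (in prob_space) tail_sum_squares_mono:
  assumes ind: "indep_var borel X borel Y" "indep_var borel X' borel Y"
    and "0 \<le> k" "0 \<le> k'" "0 \<le> x"
    and tails: "\<And>t. 0 \<le> t \<Longrightarrow> t \<le> x \<Longrightarrow> k * tail_abs M X t \<le> k' * tail_abs M X' t"
  shows "k * tail_sum_squares M X Y x \<le> k' * tail_sum_squares M X' Y x"
proof -
  have [measurable]: "X \<in> borel_measurable M" "X' \<in> borel_measurable M"
    using ind by (simp_all add: indep_var_distribution_eq)
  note [measurable] = borel_measurable_tail_abs
  define level where "level y = sqrt (max 0 (x\<^sup>2 - y\<^sup>2))" for y :: real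
  have level: "0 \<le> level y" "level y \<le> x" for y
    using real_sqrt_le_mono[of "max 0 (x\<^sup>2 - y\<^sup>2)" "x\<^sup>2"] \<open>0 \<le> x\<close> by (auto simp: level_def)
  have nonneg: "0 \<le> tail_sum_squares M Z Y x" for Z by (simp add: tail_sum_squares_def)
  have "ennreal (k * tail_sum_squares M X Y x)
      = (\<integral>\<^sup>+ y. ennreal k * ennreal (tail_abs M X (level y)) \<partial>distr M borel Y)"
    using \<open>0 \<le> k\<close> nonneg by (simp add: ennreal_mult tail_sum_squares_eq_nn_integral[OF ind(1)]
        nn_integral_cmult level_def)
  also have "\<dots> \<le> (\<integral>\<^sup>+ y. ennreal k' * ennreal (tail_abs M X' (level y)) \<partial>distr M borel Y)"
    using tails[OF level] \<open>0 \<le> k\<close> \<open>0 \<le> k'\<close>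
    by (intro nn_integral_mono) (simp add: ennreal_mult[symmetric] tail_abs_def)
  also have "\<dots> = ennreal (k' * tail_sum_squares M X' Y x)"
    using \<open>0 \<le> k'\<close> nonneg by (simp add: ennreal_mult tail_sum_squares_eq_nn_integral[OF ind(2)]
        nn_integral_cmult level_def)
  finally show ?thesis using \<open>0 \<le> k'\<close> by (simp add: tail_sum_squares_def)
qed

lemma (in prob_space) tail_sum_squares_rel_bounds:
  assumes ind: "indep_var borel X borel Y" "indep_var borel X' borel Y"
    and "0 \<le> c" "c \<le> 1" "0 \<le> x"
    and tails: "\<And>t. 0 \<le> t \<Longrightarrow> t \<le> x \<Longrightarrow>
      (1 - c) * tail_abs M X' t \<le> tail_abs M X t \<and> tail_abs M X t \<le> (1 + c) * tail_abs M X' t"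
  shows "(1 - c) * tail_sum_squares M X' Y x \<le> tail_sum_squares M X Y x"
    "tail_sum_squares M X Y x \<le> (1 + c) * tail_sum_squares M X' Y x"
  using tail_sum_squares_mono[OF ind(2,1), of "1 - c" 1 x]
    tail_sum_squares_mono[OF ind, of 1 "1 + c" x] tails assms(3-5)
  by simp_all

theorem lemma6p3:
  fixes M :: "'a measure" and U1 U2 V1 V2 :: "'a \<Rightarrow> real" and c0 x0 :: real
  assumes "prob_space M"
    and "prob_space.indep_vars M (\<lambda>_. borel) (\<lambda>i. [U1, U2, V1, V2] ! i) {0..<4}"
    and "0 \<le> c0" and "c0 \<le> 1" and "x0 > 0"
    and "\<forall>x. 0 \<le> x \<and> x \<le> x0 \<longrightarrow> (\<exists>\<theta>. \<bar>\<theta>\<bar> \<le> c0 \<and>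
           measure M {\<omega> \<in> space M. \<bar>U1 \<omega>\<bar> \<ge> x} = measure M {\<omega> \<in> space M. \<bar>V1 \<omega>\<bar> \<ge> x} * (1 + \<theta>))"
    and "\<forall>x. 0 \<le> x \<and> x \<le> x0 \<longrightarrow> (\<exists>\<theta>. \<bar>\<theta>\<bar> \<le> c0 \<and>
           measure M {\<omega> \<in> space M. \<bar>U2 \<omega>\<bar> \<ge> x} = measure M {\<omega> \<in> space M. \<bar>V2 \<omega>\<bar> \<ge> x} * (1 + \<theta>))"
  shows "\<forall>x. 0 \<le> x \<and> x \<le> x0 \<longrightarrow> (\<exists>\<theta>. \<bar>\<theta>\<bar> \<le> 3 * c0 \<and>
           measure M {\<omega> \<in> space M. (U1 \<omega>)\<^sup>2 + (U2 \<omega>)\<^sup>2 \<ge> x\<^sup>2}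
             = measure M {\<omega> \<in> space M. (V1 \<omega>)\<^sup>2 + (V2 \<omega>)\<^sup>2 \<ge> x\<^sup>2} * (1 + \<theta>))"
proof (intro allI impI)
  interpret prob_space M by fact
  fix x assume x: "0 \<le> x \<and> x \<le> x0"
  have indep: "indep_var borel ([U1, U2, V1, V2] ! i) borel ([U1, U2, V1, V2] ! j)"
    if "i < 4" "j < 4" "i \<noteq> j" for i j
    using indep_vars_imp_indep_var[OF assms(2)] that by simp
  have tails1: "(1 - c0) * tail_abs M V1 t \<le> tail_abs M U1 t \<and> tail_abs M U1 t \<le> (1 + c0) * tail_abs M V1 t"
    and tails2: "(1 - c0) * tail_abs M V2 t \<le> tail_abs M U2 t \<and> tail_abs M U2 t \<le> (1 + c0) * tail_abs M V2 t"
    if "0 \<le> t" "t \<le> x" for t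
    using assms(6,7) that x \<open>0 \<le> c0\<close>
    by (simp_all add: tail_abs_def rel_error_iff_bounds[symmetric])
  have "(1 - c0) * tail_sum_squares M V1 U2 x \<le> tail_sum_squares M U1 U2 x"
    "tail_sum_squares M U1 U2 x \<le> (1 + c0) * tail_sum_squares M V1 U2 x"
    using tail_sum_squares_rel_bounds[OF indep[of 0 1] indep[of 2 1]] tails1 x assms(3,4) by simp_all
  moreover have "(1 - c0) * tail_sum_squares M V1 V2 x \<le> tail_sum_squares M V1 U2 x"
    "tail_sum_squares M V1 U2 x \<le> (1 + c0) * tail_sum_squares M V1 V2 x"
    using tail_sum_squares_rel_bounds[OF indep[of 1 2] indep[of 3 2]] tails2 x assms(3,4)
    by (simp_all add: tail_sum_squares_commute[of M _ V1])
  ultimately show "\<exists>\<theta>. \<bar>\<theta>\<bar> \<le> 3 * c0 \<and>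
           measure M {\<omega> \<in> space M. (U1 \<omega>)\<^sup>2 + (U2 \<omega>)\<^sup>2 \<ge> x\<^sup>2}
             = measure M {\<omega> \<in> space M. (V1 \<omega>)\<^sup>2 + (V2 \<omega>)\<^sup>2 \<ge> x\<^sup>2} * (1 + \<theta>)"
    using rel_bounds_trans[of c0 _ _ "tail_sum_squares M V1 V2 x"] assms(3,4)
    by (simp add: rel_error_iff_bounds tail_sum_squares_def)
qed

end
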